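(* Let $(\mathfrak g,[\cdot,\cdot]_{\mathfrak g},E)$ be an ENL algebra and $r\in\mathfrak g\otimes\mathfrak g$. Assume that the cobracket $\Delta_r(x)=(\mathrm{ad}_x\otimes\mathrm{Id}+\mathrm{Id}\otimes\mathrm{ad}_x)(r)$ endows $(\mathfrak g,\mathfrak g^* )$ with a coboundary Lie bialgebra structure, where the bracket on $\mathfrak g^*$ is $\langle[\alpha,\beta]_{\mathfrak g^*},x\rangle=\langle\alpha\otimes\beta,\Delta_r(x)\rangle$. Then $(\mathfrak g^*,[\cdot,\cdot]_{\mathfrak g^*},E^* )$ is an ENL algebra if and only if for all $x\in\mathfrak g$, $(\mathrm{ad}_{Ex}\otimes\mathrm{Id}+\mathrm{Id}\otimes\mathrm{ad}_{Ex})(r)=(E\otimes\mathrm{Id})(\mathrm{ad}_x\otimes\mathrm{Id}+\mathrm{Id}\otimes\mathrm{ad}_x)(r)$.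
   Context: Vector spaces are finite-dimensional over an algebraically closed field of characteristic zero. An ENL algebra $(\mathfrak g,[\cdot,\cdot],E)$ is a Lie algebra with linear $E$ satisfying $E[x,y]=[x,Ey]$ for all $x,y$ (equivalently $E[x,y]=[Ex,y]$). $E^*$ denotes the dual map of $E$. *)

theory Defs
  imports "HOL-Computational_Algebra.Polynomial"
begin

text \<open>Finite-dimensional vector spaces are modelled in coordinates: a space of
dimension CARD('n) over the field 'k is the function space 'n \<Rightarrow> 'k
(standard basis basis_vec i). The dual space is again 'n \<Rightarrow> 'k with the
pairing dpair. Elements of g \<otimes> g are coefficient arrays 'n \<Rightarrow> 'n \<Rightarrow> 'k
with respect to the basis e_i \<otimes> e_j.\<close>

definition alg_closed_field :: "'k::field itself \<Rightarrow> bool" where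
  "alg_closed_field _ \<longleftrightarrow> (\<forall>p::'k poly. degree p \<noteq> 0 \<longrightarrow> (\<exists>z. poly p z = 0))"

definition lin_map :: "(('n \<Rightarrow> 'k::field) \<Rightarrow> ('m \<Rightarrow> 'k)) \<Rightarrow> bool" where
  "lin_map f \<longleftrightarrow> (\<forall>x y c. f (\<lambda>i. c * x i + y i) = (\<lambda>i. c * f x i + f y i))"

definition bilinear_map :: "(('n \<Rightarrow> 'k::field) \<Rightarrow> ('n \<Rightarrow> 'k) \<Rightarrow> ('n \<Rightarrow> 'k)) \<Rightarrow> bool" where
  "bilinear_map b \<longleftrightarrow> (\<forall>z. lin_map (\<lambda>x. b x z) \<and> lin_map (\<lambda>x. b z x))"

definition lie_bracket :: "(('n \<Rightarrow> 'k::field) \<Rightarrow> ('n \<Rightarrow> 'k) \<Rightarrow> ('n \<Rightarrow> 'k)) \<Rightarrow> bool" where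
  "lie_bracket b \<longleftrightarrow> bilinear_map b \<and> (\<forall>x. b x x = (\<lambda>_. 0)) \<and>
     (\<forall>x y z. (\<lambda>i. b x (b y z) i + b y (b z x) i + b z (b x y) i) = (\<lambda>_. 0))"

definition ENL :: "(('n \<Rightarrow> 'k::field) \<Rightarrow> ('n \<Rightarrow> 'k) \<Rightarrow> ('n \<Rightarrow> 'k)) \<Rightarrow> (('n \<Rightarrow> 'k) \<Rightarrow> ('n \<Rightarrow> 'k)) \<Rightarrow> bool" where
  "ENL b E \<longleftrightarrow> lie_bracket b \<and> lin_map E \<and> (\<forall>x y. E (b x y) = b x (E y))"

definition basis_vec :: "'n \<Rightarrow> 'n \<Rightarrow> 'k::field" where
  "basis_vec i = (\<lambda>j. if j = i then 1 else 0)"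

definition tensor_map :: "(('n::finite \<Rightarrow> 'k::field) \<Rightarrow> ('n \<Rightarrow> 'k)) \<Rightarrow> (('n \<Rightarrow> 'k) \<Rightarrow> ('n \<Rightarrow> 'k))
    \<Rightarrow> ('n \<Rightarrow> 'n \<Rightarrow> 'k) \<Rightarrow> ('n \<Rightarrow> 'n \<Rightarrow> 'k)" where
  "tensor_map A B t = (\<lambda>k l. \<Sum>i\<in>UNIV. \<Sum>j\<in>UNIV. t i j * A (basis_vec i) k * B (basis_vec j) l)"

definition tensor_ad :: "(('n::finite \<Rightarrow> 'k::field) \<Rightarrow> ('n \<Rightarrow> 'k) \<Rightarrow> ('n \<Rightarrow> 'k)) \<Rightarrow> ('n \<Rightarrow> 'k)
    \<Rightarrow> ('n \<Rightarrow> 'n \<Rightarrow> 'k) \<Rightarrow> ('n \<Rightarrow> 'n \<Rightarrow> 'k)" where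
  "tensor_ad b x t = (\<lambda>k l. tensor_map (b x) id t k l + tensor_map id (b x) t k l)"

definition cobracket :: "(('n::finite \<Rightarrow> 'k::field) \<Rightarrow> ('n \<Rightarrow> 'k) \<Rightarrow> ('n \<Rightarrow> 'k)) \<Rightarrow> ('n \<Rightarrow> 'n \<Rightarrow> 'k)
    \<Rightarrow> ('n \<Rightarrow> 'k) \<Rightarrow> ('n \<Rightarrow> 'n \<Rightarrow> 'k)" where
  "cobracket b r x = tensor_ad b x r"

definition dpair :: "('n::finite \<Rightarrow> 'k::field) \<Rightarrow> ('n \<Rightarrow> 'k) \<Rightarrow> 'k" where
  "dpair \<alpha> x = (\<Sum>i\<in>UNIV. \<alpha> i * x i)"

definition dpair2 :: "('n::finite \<Rightarrow> 'k::field) \<Rightarrow> ('n \<Rightarrow> 'k) \<Rightarrow> ('n \<Rightarrow> 'n \<Rightarrow> 'k) \<Rightarrow> 'k" where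
  "dpair2 \<alpha> \<beta> t = (\<Sum>k\<in>UNIV. \<Sum>l\<in>UNIV. \<alpha> k * \<beta> l * t k l)"

definition dual_bracket :: "(('n::finite \<Rightarrow> 'k::field) \<Rightarrow> ('n \<Rightarrow> 'n \<Rightarrow> 'k))
    \<Rightarrow> ('n \<Rightarrow> 'k) \<Rightarrow> ('n \<Rightarrow> 'k) \<Rightarrow> ('n \<Rightarrow> 'k)" where
  "dual_bracket \<delta> \<alpha> \<beta> = (\<lambda>i. dpair2 \<alpha> \<beta> (\<delta> (basis_vec i)))"

definition dual_map :: "(('n::finite \<Rightarrow> 'k::field) \<Rightarrow> ('n \<Rightarrow> 'k)) \<Rightarrow> ('n \<Rightarrow> 'k) \<Rightarrow> ('n \<Rightarrow> 'k)" where
  "dual_map E \<alpha> = (\<lambda>i. dpair \<alpha> (E (basis_vec i)))"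

definition lie_bialgebra :: "(('n::finite \<Rightarrow> 'k::field) \<Rightarrow> ('n \<Rightarrow> 'k) \<Rightarrow> ('n \<Rightarrow> 'k))
    \<Rightarrow> (('n \<Rightarrow> 'k) \<Rightarrow> ('n \<Rightarrow> 'n \<Rightarrow> 'k)) \<Rightarrow> bool" where
  "lie_bialgebra b \<delta> \<longleftrightarrow> lie_bracket b
     \<and> (\<forall>x y c. \<delta> (\<lambda>i. c * x i + y i) = (\<lambda>k l. c * \<delta> x k l + \<delta> y k l))
     \<and> lie_bracket (dual_bracket \<delta>)
     \<and> (\<forall>x y. \<delta> (b x y) = (\<lambda>k l. tensor_ad b x (\<delta> y) k l - tensor_ad b y (\<delta> x) k l))"

end

theory Submission
  imports Defs
begin

(* Pairing with alpha \<otimes> beta expresses both sides of the ENL identity on g* through Delta_r: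
   <E*[alpha,beta], x> = <alpha \<otimes> beta, Delta_r(E x)> and
   <[E* alpha, beta], x> = <alpha \<otimes> beta, (E \<otimes> Id) Delta_r(x)>.
   By antisymmetry of the bracket on g*, E*[alpha,beta] = [alpha, E* beta] for all alpha, beta is
   equivalent to E*[alpha,beta] = [E* alpha, beta] for all alpha, beta, and since the pairing is
   nondegenerate this says exactly Delta_r o E = (E \<otimes> Id) o Delta_r. *)

lemma basis_vec_commute: "basis_vec i j = basis_vec j i"
  by (simp add: basis_vec_def)

lemma sum_mult_basis_vec:
  fixes f :: "'n::finite \<Rightarrow> 'k::field"
  shows "(\<Sum>j\<in>UNIV. f j * basis_vec i j) = f i"
proof -
  have "(\<Sum>j\<in>UNIV. f j * basis_vec i j) = (\<Sum>j\<in>UNIV. if j = i then f j else 0)"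
    by (intro sum.cong) (auto simp: basis_vec_def)
  then show ?thesis by simp
qed

lemma dpair2_basis_vec: "dpair2 (basis_vec k) (basis_vec l) t = t k l"
proof -
  have "dpair2 (basis_vec k) (basis_vec l) t =
        (\<Sum>k'\<in>UNIV. (\<Sum>l'\<in>UNIV. t k' l' * basis_vec l l') * basis_vec k k')"
    unfolding dpair2_def sum_distrib_right
    by (intro sum.cong refl) (simp add: algebra_simps)
  then show ?thesis by (simp add: sum_mult_basis_vec)
qed

lemma tensor_eq_iff_dpair2:
  fixes s t :: "'n::finite \<Rightarrow> 'n \<Rightarrow> 'k::field"
  shows "s = t \<longleftrightarrow> (\<forall>\<alpha> \<beta>. dpair2 \<alpha> \<beta> s = dpair2 \<alpha> \<beta> t)"
  by (metis dpair2_basis_vec ext)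

lemma dpair2_linear:
  "dpair2 \<alpha> \<beta> (\<lambda>k l. c * s k l + t k l) = c * dpair2 \<alpha> \<beta> s + dpair2 \<alpha> \<beta> t"
  by (simp add: dpair2_def sum.distrib sum_distrib_left algebra_simps)

lemma tensor_map_linear:
  "tensor_map A B (\<lambda>k l. c * s k l + t k l) =
     (\<lambda>k l. c * tensor_map A B s k l + tensor_map A B t k l)"
  by (simp add: tensor_map_def sum.distrib sum_distrib_left algebra_simps)

lemma tensor_map_id_right:
  "tensor_map A id t k l = (\<Sum>m\<in>UNIV. t m l * A (basis_vec m) k)"
proof -
  have "tensor_map A id t k l = (\<Sum>m\<in>UNIV. (\<Sum>j\<in>UNIV. t m j * basis_vec l j) * A (basis_vec m) k)"
    unfolding tensor_map_def sum_distrib_right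
    by (intro sum.cong refl) (simp add: algebra_simps basis_vec_commute[of l])
  then show ?thesis by (simp add: sum_mult_basis_vec)
qed

lemma lin_functional_expand:
  fixes f :: "('n::finite \<Rightarrow> 'k::field) \<Rightarrow> 'k"
  assumes lin: "\<And>c x y. f (\<lambda>i. c * x i + y i) = c * f x + f y"
  shows "f x = (\<Sum>j\<in>UNIV. x j * f (basis_vec j))"
proof -
  have zero: "f (\<lambda>_. 0) = 0"
    using lin[of "- 1" x x] by simp
  have "f (\<lambda>i. if i \<in> S then x i else 0) = (\<Sum>j\<in>S. x j * f (basis_vec j))" if "finite S" for S
    using that
  proof (induction S rule: finite_induct)
    case empty
    show ?case using zero by simp
  next
    case (insert a S)
    have "(\<lambda>i. if i \<in> insert a S then x i else 0) =
          (\<lambda>i. x a * basis_vec a i + (if i \<in> S then x i else 0))"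
      using insert.hyps(2) by (auto simp: basis_vec_def)
    then show ?case using insert by (simp add: lin)
  qed
  from this[of UNIV] show ?thesis by simp
qed

lemma lin_functional_eq_on_basis:
  fixes f g :: "('n::finite \<Rightarrow> 'k::field) \<Rightarrow> 'k"
  assumes f_lin: "\<And>c x y. f (\<lambda>i. c * x i + y i) = c * f x + f y"
    and g_lin: "\<And>c x y. g (\<lambda>i. c * x i + y i) = c * g x + g y"
    and on_basis: "\<And>j. f (basis_vec j) = g (basis_vec j)"
  shows "f = g"
proof
  fix x
  have "f x = (\<Sum>j\<in>UNIV. x j * f (basis_vec j))"
    by (rule lin_functional_expand[OF f_lin])
  also have "\<dots> = (\<Sum>j\<in>UNIV. x j * g (basis_vec j))"
    by (simp only: on_basis)
  also have "\<dots> = g x"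
    by (rule lin_functional_expand[OF g_lin, symmetric])
  finally show "f x = g x" .
qed

lemma lin_map_uminus:
  assumes "lin_map F"
  shows "F (\<lambda>i. - x i) = (\<lambda>i. - F x i)"
proof -
  have lin: "F (\<lambda>i. c * x i + y i) = (\<lambda>i. c * F x i + F y i)" for c x y
    using assms unfolding lin_map_def by blast
  have zero: "F (\<lambda>_. 0) = (\<lambda>_. 0)"
    using lin[of "- 1" x x] by simp
  show ?thesis
    using lin[of "- 1" x "\<lambda>_. 0"] by (simp add: zero)
qed

lemma lie_bracket_antisym:
  assumes "lie_bracket B"
  shows "B x y = (\<lambda>i. - B y x i)"
proof -
  have alt: "\<And>x. B x x = (\<lambda>_. 0)"
    and lin_left: "\<And>z. lin_map (\<lambda>x. B x z)"
    and lin_right: "\<And>z. lin_map (\<lambda>x. B z x)"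
    using assms unfolding lie_bracket_def bilinear_map_def by auto
  have add_left: "B (\<lambda>i. x i + y i) z = (\<lambda>i. B x z i + B y z i)" for x y z
  proof -
    have "B (\<lambda>i. 1 * x i + y i) z = (\<lambda>i. 1 * B x z i + B y z i)"
      using lin_left[of z] unfolding lin_map_def by blast
    then show ?thesis by simp
  qed
  have add_right: "B z (\<lambda>i. x i + y i) = (\<lambda>i. B z x i + B z y i)" for x y z
  proof -
    have "B z (\<lambda>i. 1 * x i + y i) = (\<lambda>i. 1 * B z x i + B z y i)"
      using lin_right[of z] unfolding lin_map_def by blast
    then show ?thesis by simp
  qed
  have "(\<lambda>i. B x y i + B y x i) = B (\<lambda>i. x i + y i) (\<lambda>i. x i + y i)"
    by (simp add: add_left add_right alt)
  also have "\<dots> = (\<lambda>_. 0)"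
    by (rule alt)
  finally have sum_zero: "(\<lambda>i. B x y i + B y x i) = (\<lambda>_. 0)" .
  show ?thesis
  proof
    fix i
    show "B x y i = - B y x i"
      using fun_cong[OF sum_zero, of i] by (simp add: eq_neg_iff_add_eq_0)
  qed
qed

lemma lin_map_dual_map: "lin_map (dual_map E)"
  unfolding lin_map_def dual_map_def dpair_def
  by (intro allI ext) (simp only: sum.distrib sum_distrib_left distrib_right mult.assoc)

lemma ENL_iff_left_compatible:
  assumes "lie_bracket B" and "lin_map F"
  shows "ENL B F \<longleftrightarrow> (\<forall>x y. F (B x y) = B (F x) y)"
proof -
  have "F (B x y) = B x (F y) \<longleftrightarrow> F (B y x) = B (F y) x" for x y
    by (simp add: lie_bracket_antisym[OF assms(1), of x y] lie_bracket_antisym[OF assms(1), of x "F y"]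
        lin_map_uminus[OF assms(2)] fun_eq_iff)
  then show ?thesis
    using assms unfolding ENL_def by blast
qed

lemma dual_map_dual_bracket:
  fixes D :: "('n::finite \<Rightarrow> 'k::field) \<Rightarrow> ('n \<Rightarrow> 'n \<Rightarrow> 'k)"
  assumes D_lin: "\<forall>x y c. D (\<lambda>i. c * x i + y i) = (\<lambda>k l. c * D x k l + D y k l)"
  shows "dual_map E (dual_bracket D \<alpha> \<beta>) i = dpair2 \<alpha> \<beta> (D (E (basis_vec i)))"
proof -
  have "dual_map E (dual_bracket D \<alpha> \<beta>) i =
        (\<Sum>j\<in>UNIV. E (basis_vec i) j * dpair2 \<alpha> \<beta> (D (basis_vec j)))"
    by (simp add: dual_map_def dual_bracket_def dpair_def mult.commute)
  also have "\<dots> = dpair2 \<alpha> \<beta> (D (E (basis_vec i)))"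
    by (rule lin_functional_expand[symmetric]) (simp add: D_lin dpair2_linear)
  finally show ?thesis .
qed

lemma dual_bracket_dual_map:
  "dual_bracket D (dual_map E \<alpha>) \<beta> i = dpair2 \<alpha> \<beta> (tensor_map E id (D (basis_vec i)))"
proof -
  let ?f = "\<lambda>m l k. \<alpha> k * \<beta> l * (D (basis_vec i) m l * E (basis_vec m) k)"
  have "dual_bracket D (dual_map E \<alpha>) \<beta> i = (\<Sum>m\<in>UNIV. \<Sum>l\<in>UNIV. \<Sum>k\<in>UNIV. ?f m l k)"
    unfolding dual_map_def dual_bracket_def dpair_def dpair2_def sum_distrib_right
    by (intro sum.cong refl) (simp add: algebra_simps)
  also have "\<dots> = (\<Sum>m\<in>UNIV. \<Sum>k\<in>UNIV. \<Sum>l\<in>UNIV. ?f m l k)"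
    by (intro sum.cong refl sum.swap)
  also have "\<dots> = (\<Sum>k\<in>UNIV. \<Sum>m\<in>UNIV. \<Sum>l\<in>UNIV. ?f m l k)"
    by (rule sum.swap)
  also have "\<dots> = (\<Sum>k\<in>UNIV. \<Sum>l\<in>UNIV. \<Sum>m\<in>UNIV. ?f m l k)"
    by (intro sum.cong refl sum.swap)
  also have "\<dots> = dpair2 \<alpha> \<beta> (tensor_map E id (D (basis_vec i)))"
    by (simp add: dpair2_def tensor_map_id_right sum_distrib_left)
  finally show ?thesis .
qed

lemma dual_left_compatible_iff_on_basis:
  fixes D :: "('n::finite \<Rightarrow> 'k::field) \<Rightarrow> ('n \<Rightarrow> 'n \<Rightarrow> 'k)"
  assumes D_lin: "\<forall>x y c. D (\<lambda>i. c * x i + y i) = (\<lambda>k l. c * D x k l + D y k l)"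
  shows "(\<forall>\<alpha> \<beta>. dual_map E (dual_bracket D \<alpha> \<beta>) = dual_bracket D (dual_map E \<alpha>) \<beta>) \<longleftrightarrow>
         (\<forall>i. D (E (basis_vec i)) = tensor_map E id (D (basis_vec i)))"
  by (auto simp: fun_eq_iff[of "dual_map E _"] dual_map_dual_bracket[OF D_lin] dual_bracket_dual_map
      tensor_eq_iff_dpair2)

lemma tensor_map_intertwines_on_basis_iff:
  fixes D :: "('n::finite \<Rightarrow> 'k::field) \<Rightarrow> ('n \<Rightarrow> 'n \<Rightarrow> 'k)"
  assumes D_lin: "\<forall>x y c. D (\<lambda>i. c * x i + y i) = (\<lambda>k l. c * D x k l + D y k l)"
    and E_lin: "lin_map E"
  shows "(\<forall>i. D (E (basis_vec i)) = tensor_map E id (D (basis_vec i))) \<longleftrightarrow>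
         (\<forall>x. D (E x) = tensor_map E id (D x))"
proof
  assume on_basis: "\<forall>i. D (E (basis_vec i)) = tensor_map E id (D (basis_vec i))"
  show "\<forall>x. D (E x) = tensor_map E id (D x)"
  proof (intro allI ext)
    fix x k l
    have "(\<lambda>x. D (E x) k l) = (\<lambda>x. tensor_map E id (D x) k l)"
    proof (rule lin_functional_eq_on_basis)
      show "D (E (\<lambda>i. c * x i + y i)) k l = c * D (E x) k l + D (E y) k l" for c x y
        using E_lin D_lin by (simp add: lin_map_def)
      show "tensor_map E id (D (\<lambda>i. c * x i + y i)) k l =
            c * tensor_map E id (D x) k l + tensor_map E id (D y) k l" for c x y
        using D_lin by (simp add: tensor_map_linear)
      show "D (E (basis_vec j)) k l = tensor_map E id (D (basis_vec j)) k l" for j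
        using on_basis by simp
    qed
    then show "D (E x) k l = tensor_map E id (D x) k l"
      by (rule fun_cong)
  qed
qed simp

theorem proposition5p4:
  fixes b :: "('n::finite \<Rightarrow> 'k::field_char_0) \<Rightarrow> ('n \<Rightarrow> 'k) \<Rightarrow> ('n \<Rightarrow> 'k)"
    and E :: "('n \<Rightarrow> 'k) \<Rightarrow> ('n \<Rightarrow> 'k)"
    and r :: "'n \<Rightarrow> 'n \<Rightarrow> 'k"
  assumes "alg_closed_field TYPE('k)"
    and "ENL b E"
    and "lie_bialgebra b (cobracket b r)"
  shows "ENL (dual_bracket (cobracket b r)) (dual_map E) \<longleftrightarrow>
         (\<forall>x. tensor_ad b (E x) r = tensor_map E id (tensor_ad b x r))"
proof -
  define D where "D = cobracket b r"
  have D_lin: "\<forall>x y c. D (\<lambda>i. c * x i + y i) = (\<lambda>k l. c * D x k l + D y k l)"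
    and dual_lie: "lie_bracket (dual_bracket D)"
    using assms(3) unfolding lie_bialgebra_def D_def by auto
  have E_lin: "lin_map E"
    using assms(2) unfolding ENL_def by blast
  have "ENL (dual_bracket D) (dual_map E) \<longleftrightarrow>
        (\<forall>\<alpha> \<beta>. dual_map E (dual_bracket D \<alpha> \<beta>) = dual_bracket D (dual_map E \<alpha>) \<beta>)"
    by (rule ENL_iff_left_compatible[OF dual_lie lin_map_dual_map])
  also have "\<dots> \<longleftrightarrow> (\<forall>i. D (E (basis_vec i)) = tensor_map E id (D (basis_vec i)))"
    by (rule dual_left_compatible_iff_on_basis[OF D_lin])
  also have "\<dots> \<longleftrightarrow> (\<forall>x. D (E x) = tensor_map E id (D x))"
    by (rule tensor_map_intertwines_on_basis_iff[OF D_lin E_lin])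
  finally show ?thesis
    by (simp add: D_def cobracket_def)
qed

end
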